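(* Let $\theta\in(0,\pi)$ and let $\mathcal{B}_\theta$ be the moduli space of spherical bigons of angle $\theta$ with labeled sides. For $i=1,2$ let $r_i$ be the radius of the disk $D_i\subset\mathbb{S}^2$ whose boundary contains side $i$, $k_i=\cot r_i$ the geodesic curvature of side $i$, $K_i=\log k_i$, $\ell_i$ the length of side $i$, and $T_i=\ell_ik_i$ its total geodesic curvature. Then the $1$-form $\omega_\theta:=\ell_1\,\mathrm{d}k_1+\ell_2\,\mathrm{d}k_2=T_1\,\mathrm{d}K_1+T_2\,\mathrm{d}K_2$ on $\mathcal{B}_\theta$ is closed.
   Context: A spherical bigon is the intersection $D_1\cap D_2$ of two open round disks in $\mathbb{S}^2$ of radii less than $\frac{\pi}{2}$, neither containing the other, with angle the interior angle at its corners; $\mathcal{B}_\theta$ consists of such bigons of angle $\theta$ with the two sides labeled $1,2$, up to label-preserving isometry. The map $(r_1,r_2)$ is a bijection $\mathcal{B}_\theta\to(0,\frac{\pi}{2})^2$, so $(k_1,k_2)$ and $(K_1,K_2)$ give smooth parametrizations of $\mathcal{B}_\theta$ by $\mathbb{R}_+^2$ and $\mathbb{R}^2$ respectively. *)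

theory Defs
  imports "HOL-Analysis.Analysis"
begin

text \<open>
  Spherical bigon D1 \<inter> D2 on the unit sphere, disks of radii r1, r2 in (0, pi/2),
  interior angle theta at the two corners.  Let c1, c2 be the centres and P a corner.
  In the spherical triangle (c1, c2, P) the sides at P are r1 (to c1) and r2 (to c2), and
  the angle at P between the two radii is pi - theta (the radii are normal to the
  boundary circles).  Side 1 is the arc of the boundary circle of D1 lying in the
  closure of D2; it subtends at c1 the angle 2*beta1, where beta1 in (0, pi) is the angle
  of the triangle at c1.  By the four-part cotangent formula
     cot beta1 = (sin r1 * cot r2 + cos r1 * cos theta) / sin theta,
  and the (spherical) length of side 1 is  sin r1 * 2 * beta1.
  Here arccot u = pi/2 - arctan u, with values in (0, pi).
\<close>

definition center_angle :: "real \<Rightarrow> real \<Rightarrow> real \<Rightarrow> real" where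
  "center_angle \<theta> r1 r2 =
     pi / 2 - arctan ((sin r1 * cot r2 + cos r1 * cos \<theta>) / sin \<theta>)"

definition side_length :: "real \<Rightarrow> real \<Rightarrow> real \<Rightarrow> real" where
  "side_length \<theta> r1 r2 = 2 * sin r1 * center_angle \<theta> r1 r2"

text \<open>radius r in (0, pi/2) with geodesic curvature k = cot r > 0\<close>
definition radius_of_curv :: "real \<Rightarrow> real" where
  "radius_of_curv k = arctan (1 / k)"

text \<open>side lengths l1, l2 as functions on B_theta in the coordinates (k1, k2) in R_+^2\<close>
definition ell1 :: "real \<Rightarrow> real \<times> real \<Rightarrow> real" where
  "ell1 \<theta> k = side_length \<theta> (radius_of_curv (fst k)) (radius_of_curv (snd k))"

definition ell2 :: "real \<Rightarrow> real \<times> real \<Rightarrow> real" where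
  "ell2 \<theta> k = side_length \<theta> (radius_of_curv (snd k)) (radius_of_curv (fst k))"

text \<open>total geodesic curvatures T_i = l_i k_i in the coordinates (K1, K2) = (log k1, log k2)
  in R^2\<close>
definition T1 :: "real \<Rightarrow> real \<times> real \<Rightarrow> real" where
  "T1 \<theta> K = ell1 \<theta> (exp (fst K), exp (snd K)) * exp (fst K)"

definition T2 :: "real \<Rightarrow> real \<times> real \<Rightarrow> real" where
  "T2 \<theta> K = ell2 \<theta> (exp (fst K), exp (snd K)) * exp (snd K)"

text \<open>The 1-form  P dx + Q dy  on an open set U of R^2 is closed:
  P, Q are differentiable and  dP/dy = dQ/dx  at every point of U.\<close>
definition closed_1form2 ::
  "(real \<times> real \<Rightarrow> real) \<Rightarrow> (real \<times> real \<Rightarrow> real) \<Rightarrow> (real \<times> real) set \<Rightarrow> bool" where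
  "closed_1form2 P Q U \<longleftrightarrow> open U \<and>
     (\<forall>z\<in>U. P differentiable (at z) \<and> Q differentiable (at z) \<and>
        (\<exists>a b. ((\<lambda>t. P (fst z, t)) has_real_derivative a) (at (snd z)) \<and>
               ((\<lambda>s. Q (s, snd z)) has_real_derivative b) (at (fst z)) \<and> a = b))"

end

theory Submission
  imports Defs
begin

(* In the curvature coordinates, sin r1 = 1 / sqrt (1 + k1^2) and
   cot beta1 = (k2 + k1 cos theta) / (sin theta sqrt (1 + k1^2)), and differentiating
   l1 = 2 sin r1 beta1 gives
     d l1 / d k2 = - 2 sin theta / (sin theta ^2 + k1^2 + k2^2 + 2 k1 k2 cos theta),
   which is symmetric in k1, k2; by symmetry of the labels it is also d l2 / d k1, so
   l1 dk1 + l2 dk2 is closed.  In the coordinates K_i = log k_i the form becomes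
   T1 dK1 + T2 dK2 because dk_i = k_i dK_i, and closedness is preserved by this change
   of variables. *)

lemma closed_1form2_cong:
  assumes "closed_1form2 P Q U"
    and "\<And>z. z \<in> U \<Longrightarrow> P z = P' z" and "\<And>z. z \<in> U \<Longrightarrow> Q z = Q' z"
  shows "closed_1form2 P' Q' U"
  unfolding closed_1form2_def
proof (intro conjI ballI)
  show U: "open U" using assms(1) by (simp add: closed_1form2_def)
  fix z assume z: "z \<in> U"
  obtain a where
      P_diff: "P differentiable (at z)" and Q_diff: "Q differentiable (at z)" and
      P_deriv: "((\<lambda>t. P (fst z, t)) has_real_derivative a) (at (snd z))" and
      Q_deriv: "((\<lambda>s. Q (s, snd z)) has_real_derivative a) (at (fst z))"
    using assms(1) z unfolding closed_1form2_def by blast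
  show "P' differentiable (at z)"
    using P_diff has_derivative_transform_within_open[OF _ U z] assms(2)
    unfolding differentiable_def by blast
  show "Q' differentiable (at z)"
    using Q_diff has_derivative_transform_within_open[OF _ U z] assms(3)
    unfolding differentiable_def by blast
  have slices_open: "open (Pair (fst z) -` U)" "open ((\<lambda>s. (s, snd z)) -` U)"
    using U by (auto intro!: continuous_open_vimage continuous_intros)
  have "((\<lambda>t. P' (fst z, t)) has_real_derivative a) (at (snd z))"
    by (rule has_field_derivative_transform_within_open[OF P_deriv slices_open(1)])
      (use z assms(2) in auto)
  moreover have "((\<lambda>s. Q' (s, snd z)) has_real_derivative a) (at (fst z))"
    by (rule has_field_derivative_transform_within_open[OF Q_deriv slices_open(2)])
      (use z assms(3) in auto)
  ultimately show "\<exists>a b. ((\<lambda>t. P' (fst z, t)) has_real_derivative a) (at (snd z)) \<and>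
      ((\<lambda>s. Q' (s, snd z)) has_real_derivative b) (at (fst z)) \<and> a = b"
    by blast
qed

lemma closed_1form2_subset:
  assumes "closed_1form2 P Q U" "open V" "V \<subseteq> U"
  shows "closed_1form2 P Q V"
  using assms unfolding closed_1form2_def by blast

lemma closed_1form2_exp_pullback:
  assumes "closed_1form2 P Q {k. 0 < fst k \<and> 0 < snd k}"
  shows "closed_1form2 (\<lambda>K. P (exp (fst K), exp (snd K)) * exp (fst K))
                       (\<lambda>K. Q (exp (fst K), exp (snd K)) * exp (snd K)) UNIV"
  unfolding closed_1form2_def
proof (intro conjI ballI open_UNIV)
  fix K :: "real \<times> real"
  let ?k = "(exp (fst K), exp (snd K))"
  have "?k \<in> {k. 0 < fst k \<and> 0 < snd k}" by simp
  with assms obtain a b where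
      P_diff: "P differentiable (at ?k)" and Q_diff: "Q differentiable (at ?k)" and
      P_deriv: "((\<lambda>t. P (fst ?k, t)) has_real_derivative a) (at (snd ?k))" and
      Q_deriv: "((\<lambda>s. Q (s, snd ?k)) has_real_derivative b) (at (fst ?k))" and
      "a = b"
    unfolding closed_1form2_def by blast
  have exp_diff: "(\<lambda>K. (exp (fst K), exp (snd K))) differentiable (at K)"
    and exp_fst_diff: "(\<lambda>K. exp (fst K)) differentiable (at K)"
    and exp_snd_diff: "(\<lambda>K. exp (snd K)) differentiable (at K)"
    unfolding differentiable_def by (rule exI, (rule derivative_intros)+)+
  show "(\<lambda>K. P (exp (fst K), exp (snd K)) * exp (fst K)) differentiable (at K)"
    using differentiable_chain_at[OF exp_diff P_diff] exp_fst_diff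
    by (intro differentiable_mult) (auto simp: o_def)
  show "(\<lambda>K. Q (exp (fst K), exp (snd K)) * exp (snd K)) differentiable (at K)"
    using differentiable_chain_at[OF exp_diff Q_diff] exp_snd_diff
    by (intro differentiable_mult) (auto simp: o_def)
  have "((\<lambda>t. P (exp (fst K), exp t) * exp (fst K)) has_real_derivative
           a * exp (snd K) * exp (fst K)) (at (snd K))"
    using DERIV_chain2[OF P_deriv[unfolded prod.sel] DERIV_exp] by (rule DERIV_cmult_right)
  moreover have "((\<lambda>s. Q (exp s, exp (snd K)) * exp (snd K)) has_real_derivative
           b * exp (fst K) * exp (snd K)) (at (fst K))"
    using DERIV_chain2[OF Q_deriv[unfolded prod.sel] DERIV_exp] by (rule DERIV_cmult_right)
  ultimately show "\<exists>a b.
      ((\<lambda>t. P (exp (fst (fst K, t)), exp (snd (fst K, t))) * exp (fst (fst K, t)))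
         has_real_derivative a) (at (snd K)) \<and>
      ((\<lambda>s. Q (exp (fst (s, snd K)), exp (snd (s, snd K))) * exp (snd (s, snd K)))
         has_real_derivative b) (at (fst K)) \<and> a = b"
    using \<open>a = b\<close> by (intro exI conjI) (auto simp: mult_ac)
qed

lemma one_plus_square_pos [simp]: "0 < 1 + (y::real)\<^sup>2"
  by (simp add: add_pos_nonneg)

lemma one_plus_square_neq_zero [simp]: "1 + (y::real)\<^sup>2 \<noteq> 0"
  using one_plus_square_pos[of y] by linarith

text \<open>The side length in terms of the curvatures a = cot r1 and b = cot r2: for r = arctan (1 / a)
  one has sin r = 1 / sqrt (1 + a^2) and cos r = a / sqrt (1 + a^2).\<close>

definition side_length_curv :: "real \<Rightarrow> real \<Rightarrow> real \<Rightarrow> real" where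
  "side_length_curv \<theta> a b =
     2 / sqrt (1 + a\<^sup>2) * (pi / 2 - arctan ((b + a * cos \<theta>) / (sin \<theta> * sqrt (1 + a\<^sup>2))))"

lemma side_length_radius_of_curv:
  assumes "0 < a" "0 < b"
  shows "side_length \<theta> (radius_of_curv a) (radius_of_curv b) = side_length_curv \<theta> a b"
proof -
  have "sqrt (1 + (1 / a)\<^sup>2) = sqrt (1 + a\<^sup>2) / a"
    using assms by (simp add: field_simps real_sqrt_divide)
  then have sin_r: "sin (arctan (1 / a)) = 1 / sqrt (1 + a\<^sup>2)"
    and cos_r: "cos (arctan (1 / a)) = a / sqrt (1 + a\<^sup>2)"
    using assms by (simp_all add: sin_arctan cos_arctan)
  have cot_r: "cot (arctan (1 / b)) = b"
    using assms by (simp add: cot_def sin_arctan cos_arctan)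
  show ?thesis
    unfolding side_length_def center_angle_def radius_of_curv_def side_length_curv_def
      sin_r cos_r cot_r
    by (simp add: field_simps)
qed

lemma differentiable_side_length_curv:
  fixes f g :: "'a::real_normed_vector \<Rightarrow> real"
  assumes "sin \<theta> \<noteq> 0" "f differentiable (at z)" "g differentiable (at z)"
  shows "(\<lambda>z. side_length_curv \<theta> (f z) (g z)) differentiable (at z)"
proof -
  obtain f' g' where "(f has_derivative f') (at z)" "(g has_derivative g') (at z)"
    using assms(2,3) unfolding differentiable_def by blast
  then show ?thesis
    unfolding side_length_curv_def differentiable_def
    by (intro exI) (rule derivative_intros | assumption | (simp add: assms(1); fail))+
qed

lemma has_real_derivative_side_length_curv:
  assumes "sin \<theta> \<noteq> 0"
  shows "((\<lambda>b. side_length_curv \<theta> a b) has_real_derivative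
           - 2 * sin \<theta> / ((sin \<theta>)\<^sup>2 + a\<^sup>2 + b\<^sup>2 + 2 * cos \<theta> * a * b)) (at b)"
proof -
  define v where "v = sqrt (1 + a\<^sup>2)"
  define x where "x = (b + a * cos \<theta>) / (sin \<theta> * v)"
  have v: "0 < v" "v\<^sup>2 = 1 + a\<^sup>2"
    unfolding v_def by simp_all
  have denom_pos: "0 < (sin \<theta> * v)\<^sup>2 + (b + a * cos \<theta>)\<^sup>2"
    using v(1) assms by (simp add: add_pos_nonneg)
  have "((\<lambda>b. (b + a * cos \<theta>) / (sin \<theta> * v)) has_real_derivative 1 / (sin \<theta> * v)) (at b)"
    using assms v(1) by (auto intro!: derivative_eq_intros)
  from DERIV_chain2[OF DERIV_arctan this]
  have "((\<lambda>b. side_length_curv \<theta> a b) has_real_derivative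
      2 / v * (0 - inverse (1 + x\<^sup>2) * (1 / (sin \<theta> * v)))) (at b)"
    unfolding side_length_curv_def v_def[symmetric] x_def
    by (intro DERIV_cmult DERIV_diff DERIV_const)
  moreover have "2 / v * (0 - inverse (1 + x\<^sup>2) * (1 / (sin \<theta> * v)))
      = - 2 * sin \<theta> / ((sin \<theta> * v)\<^sup>2 + (b + a * cos \<theta>)\<^sup>2)"
    using v(1) assms denom_pos unfolding x_def by (simp add: field_simps power2_eq_square)
  moreover have "(sin \<theta> * v)\<^sup>2 + (b + a * cos \<theta>)\<^sup>2
      = (sin \<theta>)\<^sup>2 + a\<^sup>2 + b\<^sup>2 + 2 * cos \<theta> * a * b"
    using v(2) sin_cos_squared_add[of \<theta>] by algebra
  ultimately show ?thesis by simp
qed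


lemma closed_1form2_side_length_curv:
  assumes "sin \<theta> \<noteq> 0"
  shows "closed_1form2 (\<lambda>k. side_length_curv \<theta> (fst k) (snd k))
                       (\<lambda>k. side_length_curv \<theta> (snd k) (fst k)) UNIV"
  unfolding closed_1form2_def
proof (intro conjI ballI open_UNIV)
  fix z :: "real \<times> real"
  have fst_diff: "fst differentiable (at z)" and snd_diff: "snd differentiable (at z)"
    by (simp_all add: bounded_linear_imp_differentiable bounded_linear_fst bounded_linear_snd)
  show "(\<lambda>k. side_length_curv \<theta> (fst k) (snd k)) differentiable (at z)"
    and "(\<lambda>k. side_length_curv \<theta> (snd k) (fst k)) differentiable (at z)"
    using differentiable_side_length_curv[OF assms] fst_diff snd_diff by blast+
  have denom_sym: "(sin \<theta>)\<^sup>2 + a\<^sup>2 + b\<^sup>2 + 2 * cos \<theta> * a * b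
      = (sin \<theta>)\<^sup>2 + b\<^sup>2 + a\<^sup>2 + 2 * cos \<theta> * b * a" for a b :: real
    by (simp add: algebra_simps)
  show "\<exists>a b. ((\<lambda>t. side_length_curv \<theta> (fst (fst z, t)) (snd (fst z, t)))
                   has_real_derivative a) (at (snd z)) \<and>
             ((\<lambda>s. side_length_curv \<theta> (snd (s, snd z)) (fst (s, snd z)))
                   has_real_derivative b) (at (fst z)) \<and> a = b"
    using has_real_derivative_side_length_curv[OF assms, of "fst z" "snd z"]
      has_real_derivative_side_length_curv[OF assms, of "snd z" "fst z"]
    by (auto simp: denom_sym)
qed

theorem lemma3p2:
  fixes \<theta> :: real
  assumes "0 < \<theta>" and "\<theta> < pi"
  shows "closed_1form2 (ell1 \<theta>) (ell2 \<theta>) {k. 0 < fst k \<and> 0 < snd k}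
       \<and> closed_1form2 (T1 \<theta>) (T2 \<theta>) UNIV"
proof
  have "sin \<theta> \<noteq> 0"
    using assms sin_gt_zero by fastforce
  moreover have "open {k :: real \<times> real. 0 < fst k \<and> 0 < snd k}"
    by (intro open_Collect_conj open_Collect_less continuous_intros)
  ultimately have "closed_1form2 (\<lambda>k. side_length_curv \<theta> (fst k) (snd k))
      (\<lambda>k. side_length_curv \<theta> (snd k) (fst k)) {k. 0 < fst k \<and> 0 < snd k}"
    by (blast intro: closed_1form2_subset closed_1form2_side_length_curv)
  then show ell: "closed_1form2 (ell1 \<theta>) (ell2 \<theta>) {k. 0 < fst k \<and> 0 < snd k}"
    by (rule closed_1form2_cong) (simp_all add: ell1_def ell2_def side_length_radius_of_curv)
  have "T1 \<theta> = (\<lambda>K. ell1 \<theta> (exp (fst K), exp (snd K)) * exp (fst K))"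
    and "T2 \<theta> = (\<lambda>K. ell2 \<theta> (exp (fst K), exp (snd K)) * exp (snd K))"
    by (simp_all add: T1_def T2_def fun_eq_iff)
  with closed_1form2_exp_pullback[OF ell] show "closed_1form2 (T1 \<theta>) (T2 \<theta>) UNIV"
    by simp
qed

end
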